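(* For any consistent set $T$ of explicit literals and any nested expression $F$: $T\models F$ iff $T\models F^T$; and $T=\!\!|\;F$ iff $T=\!\!|\;F^T$.
   Context: Fix a set $\mathit{At}$ of atoms. An explicit literal is $p$ or $\sim p$ for $p\in\mathit{At}$; a set of explicit literals is consistent if it never contains both $p$ and $\sim p$. Nested expressions: $F ::= \top\mid\bot\mid p\mid F\vee F\mid F\wedge F\mid\neg F\mid\sim F$. Satisfaction/falsification by a consistent set $T$: $T\models\top$, $T$ does not falsify $\top$; $T\not\models\bot$, $T=\!\!|\;\bot$; $T\models p$ iff $p\in T$, $T=\!\!|\;p$ iff $\sim p\in T$; $T\models\varphi\wedge\psi$ iff both, $T=\!\!|\;\varphi\wedge\psi$ iff at least one falsified; $T\models\varphi\vee\psi$ iff at least one, $T=\!\!|\;\varphi\vee\psi$ iff both falsified; $T\models\sim\varphi$ iff $T=\!\!|\;\varphi$, $T=\!\!|\;\sim\varphi$ iff $T\models\varphi$; $T\models\neg\varphi$ iff $T\not\models\varphi$, $T=\!\!|\;\neg\varphi$ iff $T\models\varphi$. Reduct: $\top^T=\top$, $\bot^T=\bot$, $p^T=p$, $(F\wedge G)^T=F^T\wedge G^T$, $(F\vee G)^T=F^T\vee G^T$, $(\sim F)^T=\sim(F^T)$, $(\neg F)^T=\bot$ if $T\models F$ and $\top$ otherwise. *)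

theory Defs
  imports Main
begin

datatype 'a lit = Pos 'a | SNeg 'a

definition consistent :: "'a lit set \<Rightarrow> bool" where
  "consistent T \<longleftrightarrow> (\<forall>p. \<not> (Pos p \<in> T \<and> SNeg p \<in> T))"

text \<open>Nested expressions: Top, Bot, atoms, disjunction, conjunction,
  default negation (Not) and strong negation (SNot).\<close>
datatype 'a nexpr = Top | Bot | Atom 'a | Or "'a nexpr" "'a nexpr"
  | And "'a nexpr" "'a nexpr" | Not "'a nexpr" | SNot "'a nexpr"

fun sat :: "'a lit set \<Rightarrow> 'a nexpr \<Rightarrow> bool"
and fals :: "'a lit set \<Rightarrow> 'a nexpr \<Rightarrow> bool" where
  "sat T Top = True"
| "sat T Bot = False"
| "sat T (Atom p) = (Pos p \<in> T)"
| "sat T (And F G) = (sat T F \<and> sat T G)"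
| "sat T (Or F G) = (sat T F \<or> sat T G)"
| "sat T (SNot F) = fals T F"
| "sat T (Not F) = (\<not> sat T F)"
| "fals T Top = False"
| "fals T Bot = True"
| "fals T (Atom p) = (SNeg p \<in> T)"
| "fals T (And F G) = (fals T F \<or> fals T G)"
| "fals T (Or F G) = (fals T F \<and> fals T G)"
| "fals T (SNot F) = sat T F"
| "fals T (Not F) = sat T F"

fun reduct :: "'a nexpr \<Rightarrow> 'a lit set \<Rightarrow> 'a nexpr" where
  "reduct Top T = Top"
| "reduct Bot T = Bot"
| "reduct (Atom p) T = Atom p"
| "reduct (And F G) T = And (reduct F T) (reduct G T)"
| "reduct (Or F G) T = Or (reduct F T) (reduct G T)"
| "reduct (SNot F) T = SNot (reduct F T)"
| "reduct (Not F) T = (if sat T F then Bot else Top)"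

end

theory Submission
  imports Defs
begin

lemma sat_fals_reduct:
  "(sat T (reduct F T) \<longleftrightarrow> sat T F) \<and> (fals T (reduct F T) \<longleftrightarrow> fals T F)"
  by (induction F) auto

theorem proposition1:
  fixes T :: "'a lit set" and F :: "'a nexpr"
  assumes "consistent T"
  shows "(sat T F \<longleftrightarrow> sat T (reduct F T)) \<and> (fals T F \<longleftrightarrow> fals T (reduct F T))"
  using sat_fals_reduct by blast

end
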